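(* Let $M$ be a smooth manifold of dimension $n$, let $L\in C^\infty(J^1M)$ and $\beta=dq^1\wedge\dots\wedge dq^n$, so that $L\beta\in\Omega^n(J^1M)$ is a first-order Lagrangian. Then (1) $\mathcal{E}(L\beta)$ is effective; (2) $\Delta_{\mathcal{E}(L\beta)}\phi=0$ is the Euler–Lagrange equation of the functional $\Phi_{L\beta}[\phi]=\int_M (j^1\phi)^*(L\beta)$ (over compactly supported $\phi$), i.e. it is equivalent to $\frac{\partial L(q,\phi,\phi_\mu)}{\partial\phi}-\frac{\partial}{\partial q^\mu}\frac{\partial L(q,\phi,\phi_\mu)}{\partial\phi_\mu}=0$.
   Context: $J^1M$ is the first jet bundle of functions on $M$ with local coordinates $(q^\mu,u,p_\mu)$; $j^1\phi=(q^\mu,\phi,\phi_\mu)$ with $\phi_\mu=\partial_{q^\mu}\phi$. Contact form $\mathfrak c=du-p_\mu dq^\mu$, Reeb field $\chi=\partial_u$. Projection $p(\alpha)=\alpha-\mathfrak c\wedge(\chi\lrcorner\alpha)$, projected derivative $d_p=p\circ d$. Bottom operator $\bot\alpha=\partial_{p_\mu}\lrcorner\partial_{q^\mu}\lrcorner\alpha$ (summed) for $\deg\alpha>1$, $\bot\alpha=0$ otherwise. Euler operator $\mathcal{E}:\Omega^n(J^1M)\to\Omega^n(J^1M)$, $\mathcal{E}=d_p\,\bot\, d_p+\mathcal{L}_\chi$, where $\mathcal L_\chi$ is the Lie derivative. Monge–Ampère operator $\Delta_\omega\phi=(j^1\phi)^*\omega$. A form $\omega$ is effective if $\chi\lrcorner\omega=0$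 and $\bot\omega=0$. *)

theory Defs
  imports "HOL-Analysis.Analysis"
begin

text \<open>A point (and a tangent vector) of J^1 U, U open in R^n, in coordinates (q, u, p).
  The dimension n of M is CARD('n).\<close>
type_synonym 'n jet = "(real^'n) \<times> real \<times> (real^'n)"

text \<open>Differential forms on J^1 U: a form evaluated at a point on a list of (constant)
  tangent vectors.  A k-form is only meaningful on lists of length k.\<close>
type_synonym 'n form = "'n jet \<Rightarrow> 'n jet list \<Rightarrow> real"

definition dd :: "('a::real_normed_vector \<Rightarrow> 'b::real_normed_vector) \<Rightarrow> 'a \<Rightarrow> 'a \<Rightarrow> 'b" where
  "dd f x v = vector_derivative (\<lambda>t::real. f (x + t *\<^sub>R v)) (at 0)"

fun ddl :: "('a::real_normed_vector \<Rightarrow> 'b::real_normed_vector) \<Rightarrow> 'a list \<Rightarrow> 'a \<Rightarrow> 'b" where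
  "ddl f [] = f"
| "ddl f (v # vs) = (\<lambda>x. dd (ddl f vs) x v)"

definition smooth_on :: "'a::real_normed_vector set \<Rightarrow> ('a \<Rightarrow> 'b::real_normed_vector) \<Rightarrow> bool" where
  "smooth_on S f \<longleftrightarrow> (\<forall>vs. \<forall>x\<in>S. ddl f vs differentiable (at x))"

definition eq :: "'n::finite \<Rightarrow> 'n jet" where "eq \<mu> = (axis \<mu> 1, 0, 0)"
definition eu :: "'n::finite jet" where "eu = (0, 1, 0)"
definition ep :: "'n::finite \<Rightarrow> 'n jet" where "ep \<mu> = (0, 0, axis \<mu> 1)"

text \<open>Fixed enumeration of the coordinate indices (fixes the orientation of beta).\<close>
definition idx :: "'n::finite list" where
  "idx = (SOME xs. distinct xs \<and> set xs = UNIV)"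

definition remove_nth :: "nat \<Rightarrow> 'a list \<Rightarrow> 'a list" where
  "remove_nth i xs = take i xs @ drop (Suc i) xs"

text \<open>Exterior derivative (formula for constant vector fields on an open subset of R^N).\<close>
definition extd :: "'n::finite form \<Rightarrow> 'n form" where
  "extd \<omega> x vs = (\<Sum>i<length vs. (-1)^i * dd (\<lambda>y. \<omega> y (remove_nth i vs)) x (vs ! i))"

definition interior :: "'n::finite jet \<Rightarrow> 'n form \<Rightarrow> 'n form" where
  "interior X \<omega> x vs = \<omega> x (X # vs)"

definition wedge1 :: "'n::finite form \<Rightarrow> 'n form \<Rightarrow> 'n form" where
  "wedge1 c \<alpha> x vs = (\<Sum>i<length vs. (-1)^i * c x [vs ! i] * \<alpha> x (remove_nth i vs))"

text \<open>Contact form c = du - p_mu dq^mu; Reeb field chi = d/du.\<close>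
definition contact :: "'n::finite form" where
  "contact x vs = (case vs of [v] \<Rightarrow> fst (snd v) - (snd (snd x)) \<bullet> (fst v) | _ \<Rightarrow> 0)"

definition proj :: "'n::finite form \<Rightarrow> 'n form" where
  "proj \<alpha> x vs = \<alpha> x vs - wedge1 contact (interior eu \<alpha>) x vs"

definition dproj :: "'n::finite form \<Rightarrow> 'n form" where
  "dproj \<alpha> = proj (extd \<alpha>)"

definition bot :: "nat \<Rightarrow> 'n::finite form \<Rightarrow> 'n form" where
  "bot k \<alpha> x vs = (if k > 1 then (\<Sum>\<mu>\<in>UNIV. interior (ep \<mu>) (interior (eq \<mu>) \<alpha>) x vs) else 0)"

text \<open>Lie derivative along the constant vector field chi = d/du.\<close>
definition lie_chi :: "'n::finite form \<Rightarrow> 'n form" where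
  "lie_chi \<alpha> x vs = dd (\<lambda>y. \<alpha> y vs) x eu"

definition euler_op :: "nat \<Rightarrow> 'n::finite form \<Rightarrow> 'n form" where
  "euler_op k \<omega> x vs = dproj (bot (k + 1) (dproj \<omega>)) x vs + lie_chi \<omega> x vs"

definition effective :: "'n::finite jet set \<Rightarrow> nat \<Rightarrow> 'n form \<Rightarrow> bool" where
  "effective D k \<omega> \<longleftrightarrow>
     (\<forall>x\<in>D. \<forall>vs. length vs + 1 = k \<longrightarrow> interior eu \<omega> x vs = 0) \<and>
     (\<forall>x\<in>D. \<forall>vs. length vs + 2 = k \<longrightarrow> bot k \<omega> x vs = 0)"

definition beta :: "'n::finite form" where
  "beta x vs = (if length vs = CARD('n)
      then (\<Sum>\<sigma> | \<sigma> permutes {..<CARD('n)}.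
              of_int (sign \<sigma>) * (\<Prod>k<CARD('n). fst (vs ! \<sigma> k) $ (idx ! k)))
      else 0)"

definition J1 :: "(real^'n::finite) set \<Rightarrow> 'n jet set" where
  "J1 U = {(q, u, p). q \<in> U}"

definition jet1 :: "(real^'n::finite \<Rightarrow> real) \<Rightarrow> real^'n \<Rightarrow> 'n jet" where
  "jet1 \<phi> q = (q, \<phi> q, \<chi> \<mu>. dd \<phi> q (axis \<mu> 1))"

text \<open>Monge-Ampere operator: coefficient of (j^1 phi)^* omega w.r.t. dq^1 \<and> ... \<and> dq^n.\<close>
definition MA :: "'n::finite form \<Rightarrow> (real^'n \<Rightarrow> real) \<Rightarrow> real^'n \<Rightarrow> real" where
  "MA \<omega> \<phi> q = \<omega> (jet1 \<phi> q) (map (\<lambda>\<mu>. dd (jet1 \<phi>) q (axis \<mu> 1)) idx)"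

definition EL :: "('n::finite jet \<Rightarrow> real) \<Rightarrow> (real^'n \<Rightarrow> real) \<Rightarrow> real^'n \<Rightarrow> real" where
  "EL L \<phi> q = dd L (jet1 \<phi> q) eu
     - (\<Sum>\<mu>\<in>UNIV. dd (\<lambda>q'. dd L (jet1 \<phi> q') (ep \<mu>)) q (axis \<mu> 1))"

end

theory Submission
  imports Defs
begin

text \<open>
  In coordinates d_p (L \<beta>) = d_p L \<and> \<beta>, and since \<beta> only sees dq-components, the bottom
  operator leaves -(\<partial>L/\<partial>p_\<mu>) \<iota>(\<partial>/\<partial>q^\<mu>) \<beta>. A second d_p and the Lie derivative
  L_\<chi>(L \<beta>) = (\<partial>L/\<partial>u) \<beta> give E(L \<beta>) = (\<partial>L/\<partial>u) \<beta> - d_p(\<partial>L/\<partial>p_\<mu>) \<and> \<iota>(\<partial>/\<partial>q^\<mu>) \<beta>.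
  Contracting with \<chi> kills it because d_p f (\<chi>) = 0, and its bottom is
  \<Sum> (\<partial>^2 L/\<partial>p_\<mu>\<partial>p_\<nu>) \<beta>(\<partial>/\<partial>q^\<mu>, \<partial>/\<partial>q^\<nu>, ...), which vanishes since the Hessian is
  symmetric (Young's theorem) and \<beta> is alternating. Along j^1 \<phi> the contact form vanishes,
  so d_p becomes the total derivative d/dq^\<mu>, and the pull-back of E(L \<beta>) is the
  Euler-Lagrange expression times dq^1 \<and> ... \<and> dq^n.
\<close>

lemma has_vector_derivative_along_line:
  assumes "(f has_derivative f') (at (y + s *\<^sub>R a))"
  shows "((\<lambda>t. f (y + t *\<^sub>R a)) has_vector_derivative f' a) (at s)"
proof -
  have "((\<lambda>t::real. y + t *\<^sub>R a) has_derivative (\<lambda>t. t *\<^sub>R a)) (at s)"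
    by (auto intro!: derivative_eq_intros)
  from diff_chain_at[OF this] assms
  have "((\<lambda>t. f (y + t *\<^sub>R a)) has_derivative (\<lambda>t. f' (t *\<^sub>R a))) (at s)"
    by (simp add: o_def)
  moreover have "(\<lambda>t. f' (t *\<^sub>R a)) = (\<lambda>t. t *\<^sub>R f' a)"
    using has_derivative_bounded_linear[OF assms] by (auto simp: linear_simps)
  ultimately show ?thesis
    by (simp add: has_vector_derivative_def)
qed

lemma dd_eq_has_derivative:
  assumes "(f has_derivative f') (at x)"
  shows "dd f x v = f' v"
  using has_vector_derivative_along_line[of f f' x 0 v] assms
  unfolding dd_def by (simp add: vector_derivative_at)

lemma dd_eq_frechet_derivative:
  "f differentiable (at x) \<Longrightarrow> dd f x v = frechet_derivative f (at x) v"
  by (rule dd_eq_has_derivative) (simp add: frechet_derivative_works)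

lemma dd_cong_open:
  assumes "open S" "x \<in> S" "\<And>y. y \<in> S \<Longrightarrow> f y = g y"
  shows "dd f x v = dd g x v"
proof -
  let ?T = "(\<lambda>t. x + t *\<^sub>R v) -` S"
  have T: "open ?T" "0 \<in> ?T"
    using assms(1,2) by (auto intro!: continuous_open_vimage continuous_intros)
  have "((\<lambda>t. f (x + t *\<^sub>R v)) has_vector_derivative D) (at 0) \<longleftrightarrow>
        ((\<lambda>t. g (x + t *\<^sub>R v)) has_vector_derivative D) (at 0)" for D
    using has_vector_derivative_transform_within_open[OF _ T] assms(3) by (intro iffI) force+
  then show ?thesis
    unfolding dd_def vector_derivative_def by simp
qed

lemma dd_sum_mult:
  fixes f :: "'i \<Rightarrow> 'a::real_normed_vector \<Rightarrow> real"
  assumes "finite I" "\<And>i. i \<in> I \<Longrightarrow> f i differentiable (at x)"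
  shows "dd (\<lambda>y. \<Sum>i\<in>I. f i y * c i) x v = (\<Sum>i\<in>I. dd (f i) x v * c i)"
proof -
  have "((\<lambda>y. \<Sum>i\<in>I. f i y * c i) has_derivative
         (\<lambda>h. \<Sum>i\<in>I. frechet_derivative (f i) (at x) h * c i)) (at x)"
    using assms(2) by (intro has_derivative_sum has_derivative_mult_left)
      (simp add: frechet_derivative_works)
  then show ?thesis
    using assms(2) by (simp add: dd_eq_has_derivative dd_eq_frechet_derivative)
qed

lemma dd_chain:
  assumes "f differentiable (at x)" "g differentiable (at (f x))"
  shows "dd (\<lambda>y. g (f y)) x v = dd g (f x) (dd f x v)"
proof -
  have "((g \<circ> f) has_derivative (frechet_derivative g (at (f x)) \<circ> frechet_derivative f (at x))) (at x)"
    using assms by (intro diff_chain_at) (simp_all add: frechet_derivative_works)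
  then show ?thesis
    using assms by (simp add: o_def dd_eq_has_derivative dd_eq_frechet_derivative)
qed

lemma has_real_derivative_along_line:
  fixes F :: "'a::real_normed_vector \<Rightarrow> real"
  assumes "F differentiable (at (y + s *\<^sub>R a))"
  shows "((\<lambda>t. F (y + t *\<^sub>R a)) has_real_derivative dd F (y + s *\<^sub>R a) a) (at s)"
  using has_vector_derivative_along_line[of F _ y s a] assms
  by (simp add: has_real_derivative_iff_has_vector_derivative dd_eq_frechet_derivative
      frechet_derivative_works)

section \<open>Symmetry of second directional derivatives\<close>

lemma second_difference_mean_value:
  fixes F :: "'a::real_normed_vector \<Rightarrow> real"
  assumes "0 < h"
    and "\<And>s. 0 \<le> s \<Longrightarrow> s \<le> h \<Longrightarrow> F differentiable (at (x + s *\<^sub>R a))"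
    and "\<And>s. 0 \<le> s \<Longrightarrow> s \<le> h \<Longrightarrow> F differentiable (at (x + c + s *\<^sub>R a))"
  obtains z where "0 < z" "z < h"
    "F (x + c + h *\<^sub>R a) - F (x + h *\<^sub>R a) - F (x + c) + F x
       = h * (dd F (x + c + z *\<^sub>R a) a - dd F (x + z *\<^sub>R a) a)"
proof -
  define \<phi> where "\<phi> s = F (x + c + s *\<^sub>R a) - F (x + s *\<^sub>R a)" for s
  define \<phi>' where "\<phi>' s = dd F (x + c + s *\<^sub>R a) a - dd F (x + s *\<^sub>R a) a" for s
  have "\<forall>s. 0 \<le> s \<and> s \<le> h \<longrightarrow> DERIV \<phi> s :> \<phi>' s"
    unfolding \<phi>_def \<phi>'_def using assms(2,3)
    by (auto intro!: DERIV_diff has_real_derivative_along_line)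
  then obtain z where "0 < z" "z < h" "\<phi> h - \<phi> 0 = (h - 0) * \<phi>' z"
    using MVT2[OF assms(1), of \<phi> \<phi>'] by blast
  moreover have "\<phi> h - \<phi> 0 = F (x + c + h *\<^sub>R a) - F (x + h *\<^sub>R a) - F (x + c) + F x"
    by (simp add: \<phi>_def)
  ultimately show ?thesis
    using that[of z] by (simp add: \<phi>'_def)
qed

lemma difference_quotient_estimate:
  fixes G :: "'a::real_normed_vector \<Rightarrow> real"
  assumes "bounded_linear G'" "0 \<le> \<epsilon>"
    and remainder: "\<And>y. norm (y - x) < \<delta> \<Longrightarrow> norm (G y - G x - G' (y - x)) \<le> \<epsilon> * norm (y - x)"
    and "0 < h" "0 \<le> z" "z \<le> h" "h * (norm a + norm b) < \<delta>"
  shows "\<bar>(G (x + h *\<^sub>R b + z *\<^sub>R a) - G (x + z *\<^sub>R a)) / h - G' b\<bar> \<le> \<epsilon> * (2 * norm a + norm b)"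
proof -
  define k1 where "k1 = z *\<^sub>R a + h *\<^sub>R b"
  define k2 where "k2 = z *\<^sub>R a"
  have "norm k1 \<le> z * norm a + h * norm b"
    unfolding k1_def using assms(4,5) norm_triangle_ineq[of "z *\<^sub>R a" "h *\<^sub>R b"] by simp
  then have "norm k1 \<le> h * norm a + h * norm b"
    using assms(6) mult_right_mono[OF assms(6), of "norm a"] by simp
  moreover have "norm k2 \<le> h * norm a"
    unfolding k2_def using assms(5,6) by (simp add: mult_right_mono)
  moreover have "0 \<le> h * norm b"
    using \<open>0 < h\<close> by simp
  ultimately have k1: "norm k1 < \<delta>" and k2: "norm k2 < \<delta>"
    and k12: "norm k1 + norm k2 \<le> h * (2 * norm a + norm b)"
    using assms(7) by (auto simp: algebra_simps)
  have "G' k1 - G' k2 = h * G' b"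
    unfolding k1_def k2_def using assms(1) by (simp add: linear_simps)
  then have "G (x + h *\<^sub>R b + z *\<^sub>R a) - G (x + z *\<^sub>R a) - h * G' b
      = (G (x + k1) - G x - G' k1) - (G (x + k2) - G x - G' k2)"
    unfolding k1_def k2_def by (simp add: add_ac)
  also have "\<bar>\<dots>\<bar> \<le> \<epsilon> * norm k1 + \<epsilon> * norm k2"
    using remainder[of "x + k1"] remainder[of "x + k2"] k1 k2 by (simp add: abs_diff_le_iff abs_le_iff)
  also have "\<dots> \<le> \<epsilon> * (2 * norm a + norm b) * h"
    using mult_left_mono[OF k12 \<open>0 \<le> \<epsilon>\<close>] by (simp add: distrib_left[symmetric] mult_ac)
  finally have "\<bar>G (x + h *\<^sub>R b + z *\<^sub>R a) - G (x + z *\<^sub>R a) - h * G' b\<bar> / h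
      \<le> \<epsilon> * (2 * norm a + norm b)"
    using \<open>0 < h\<close> by (simp add: pos_divide_le_eq)
  moreover have "(G (x + h *\<^sub>R b + z *\<^sub>R a) - G (x + z *\<^sub>R a)) / h - G' b
      = (G (x + h *\<^sub>R b + z *\<^sub>R a) - G (x + z *\<^sub>R a) - h * G' b) / h"
    using \<open>0 < h\<close> by (simp add: diff_divide_distrib)
  ultimately show ?thesis
    using \<open>0 < h\<close> by (simp add: abs_divide)
qed

lemma second_difference_quotient_estimate:
  fixes F :: "'a::real_normed_vector \<Rightarrow> real"
  assumes "ball x r \<subseteq> S" and F: "\<And>y. y \<in> S \<Longrightarrow> F differentiable (at y)"
    and "bounded_linear G'" "0 \<le> \<epsilon>"
    and remainder: "\<And>y. norm (y - x) < \<delta> \<Longrightarrow>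
      norm (dd F y a - dd F x a - G' (y - x)) \<le> \<epsilon> * norm (y - x)"
    and "0 < h" "h * (norm a + norm b) < min r \<delta>"
  shows "\<bar>(F (x + h *\<^sub>R a + h *\<^sub>R b) - F (x + h *\<^sub>R a) - F (x + h *\<^sub>R b) + F x) / h\<^sup>2 - G' b\<bar>
           \<le> \<epsilon> * (2 * norm a + norm b)"
proof -
  have "x + (c *\<^sub>R b + s *\<^sub>R a) \<in> S" if "c \<in> {0, h}" "0 \<le> s" "s \<le> h" for c s
  proof -
    have "norm (c *\<^sub>R b + s *\<^sub>R a) \<le> h * norm b + h * norm a"
      using that \<open>0 < h\<close> by (auto intro!: order.trans[OF norm_triangle_ineq] add_mono mult_right_mono)
    then have "x + (c *\<^sub>R b + s *\<^sub>R a) \<in> ball x r"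
      unfolding mem_ball dist_norm norm_minus_commute[of x] using assms(7) by (simp add: algebra_simps)
    then show ?thesis
      using assms(1) by blast
  qed
  then have "x + s *\<^sub>R a \<in> S" "x + h *\<^sub>R b + s *\<^sub>R a \<in> S" if "0 \<le> s" "s \<le> h" for s
    using that by (metis add.assoc add_0 insertCI scale_zero_left)+
  then obtain z where "0 < z" "z < h" and
    "F (x + h *\<^sub>R b + h *\<^sub>R a) - F (x + h *\<^sub>R a) - F (x + h *\<^sub>R b) + F x
       = h * (dd F (x + h *\<^sub>R b + z *\<^sub>R a) a - dd F (x + z *\<^sub>R a) a)"
    using second_difference_mean_value[OF \<open>0 < h\<close>, of F x a "h *\<^sub>R b"] F by blast
  then have "(F (x + h *\<^sub>R a + h *\<^sub>R b) - F (x + h *\<^sub>R a) - F (x + h *\<^sub>R b) + F x) / h\<^sup>2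
      = (dd F (x + h *\<^sub>R b + z *\<^sub>R a) a - dd F (x + z *\<^sub>R a) a) / h"
    using \<open>0 < h\<close> by (simp add: power2_eq_square add_ac)
  also have "\<bar>\<dots> - G' b\<bar> \<le> \<epsilon> * (2 * norm a + norm b)"
    using assms(3,4,6,7) \<open>0 < z\<close> \<open>z < h\<close>
    by (intro difference_quotient_estimate[where G = "\<lambda>y. dd F y a", OF _ _ remainder]) auto
  finally show ?thesis .
qed

lemma second_difference_quotient_tendsto:
  fixes F :: "'a::real_normed_vector \<Rightarrow> real"
  assumes "open S" "x \<in> S" "\<And>y. y \<in> S \<Longrightarrow> F differentiable (at y)"
    and "(\<lambda>y. dd F y a) differentiable (at x)"
  shows "((\<lambda>h. (F (x + h *\<^sub>R a + h *\<^sub>R b) - F (x + h *\<^sub>R a) - F (x + h *\<^sub>R b) + F x) / h\<^sup>2)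
           \<longlongrightarrow> dd (\<lambda>y. dd F y a) x b) (at_right 0)"
proof -
  define G' where "G' = frechet_derivative (\<lambda>y. dd F y a) (at x)"
  have G': "((\<lambda>y. dd F y a) has_derivative G') (at x)"
    using assms(4) unfolding G'_def frechet_derivative_works .
  obtain r where "r > 0" "ball x r \<subseteq> S"
    using assms(1,2) openE by blast
  define K where "K = 2 * norm a + norm b + 1"
  have "K > 0"
    unfolding K_def by (simp add: add_nonneg_pos)
  show ?thesis
    unfolding dd_eq_has_derivative[OF G']
  proof (rule tendstoI)
    fix e :: real
    assume "e > 0"
    then obtain \<delta> where "\<delta> > 0" and remainder: "\<And>y. norm (y - x) < \<delta> \<Longrightarrow>
        norm (dd F y a - dd F x a - G' (y - x)) \<le> e / K * norm (y - x)"
      using G' \<open>K > 0\<close> unfolding has_derivative_at_alt by (metis divide_pos_pos)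
    have "dist ((F (x + h *\<^sub>R a + h *\<^sub>R b) - F (x + h *\<^sub>R a) - F (x + h *\<^sub>R b) + F x) / h\<^sup>2) (G' b) < e"
      if "0 < h" "h < min r \<delta> / K" for h
    proof -
      have "h * (norm a + norm b) \<le> h * K"
        using \<open>0 < h\<close> unfolding K_def by (intro mult_left_mono) auto
      also have "h * K < min r \<delta>"
        using that \<open>K > 0\<close> by (simp add: pos_less_divide_eq)
      finally have "\<bar>(F (x + h *\<^sub>R a + h *\<^sub>R b) - F (x + h *\<^sub>R a) - F (x + h *\<^sub>R b) + F x) / h\<^sup>2 - G' b\<bar>
          \<le> e / K * (2 * norm a + norm b)"
        using \<open>ball x r \<subseteq> S\<close> assms(3) \<open>0 < h\<close> \<open>e > 0\<close> \<open>K > 0\<close>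
        by (intro second_difference_quotient_estimate[OF _ _ has_derivative_bounded_linear[OF G'] _ remainder])
          auto
      also have "\<dots> < e"
        using \<open>e > 0\<close> \<open>K > 0\<close> unfolding K_def by (simp add: field_simps)
      finally show ?thesis
        by (simp add: dist_real_def)
    qed
    moreover have "min r \<delta> / K > 0"
      using \<open>r > 0\<close> \<open>\<delta> > 0\<close> \<open>K > 0\<close> by simp
    ultimately show "\<forall>\<^sub>F h in at_right 0.
        dist ((F (x + h *\<^sub>R a + h *\<^sub>R b) - F (x + h *\<^sub>R a) - F (x + h *\<^sub>R b) + F x) / h\<^sup>2) (G' b) < e"
      unfolding eventually_at_right_field by blast
  qed
qed

text \<open>Young's theorem: the second difference quotient is symmetric in a and b, so both
  iterated derivatives are its limit.\<close>

lemma dd_dd_commute: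
  fixes F :: "'a::real_normed_vector \<Rightarrow> real"
  assumes S: "open S" "x \<in> S" and F: "\<And>y. y \<in> S \<Longrightarrow> F differentiable (at y)"
    and a: "(\<lambda>y. dd F y a) differentiable (at x)" and b: "(\<lambda>y. dd F y b) differentiable (at x)"
  shows "dd (\<lambda>y. dd F y a) x b = dd (\<lambda>y. dd F y b) x a"
proof -
  have symmetric: "(\<lambda>h. (F (x + h *\<^sub>R b + h *\<^sub>R a) - F (x + h *\<^sub>R b) - F (x + h *\<^sub>R a) + F x) / h\<^sup>2)
      = (\<lambda>h. (F (x + h *\<^sub>R a + h *\<^sub>R b) - F (x + h *\<^sub>R a) - F (x + h *\<^sub>R b) + F x) / h\<^sup>2)"
    by (simp add: algebra_simps)
  have "((\<lambda>h. (F (x + h *\<^sub>R a + h *\<^sub>R b) - F (x + h *\<^sub>R a) - F (x + h *\<^sub>R b) + F x) / h\<^sup>2)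
           \<longlongrightarrow> dd (\<lambda>y. dd F y a) x b) (at_right 0)"
    by (rule second_difference_quotient_tendsto[where S=S]) (simp_all add: S F a)
  moreover have "((\<lambda>h. (F (x + h *\<^sub>R a + h *\<^sub>R b) - F (x + h *\<^sub>R a) - F (x + h *\<^sub>R b) + F x) / h\<^sup>2)
           \<longlongrightarrow> dd (\<lambda>y. dd F y b) x a) (at_right 0)"
    unfolding symmetric[symmetric]
    by (rule second_difference_quotient_tendsto[where S=S]) (simp_all add: S F b)
  ultimately show ?thesis
    by (rule tendsto_unique[OF trivial_limit_at_right_real])
qed

lemma sum_symmetric_antisymmetric:
  fixes H B :: "'i \<Rightarrow> 'i \<Rightarrow> real"
  assumes "\<And>\<mu> \<nu>. H \<mu> \<nu> = H \<nu> \<mu>" "\<And>\<mu> \<nu>. B \<mu> \<nu> = - B \<nu> \<mu>"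
  shows "(\<Sum>\<nu>\<in>I. \<Sum>\<mu>\<in>I. H \<mu> \<nu> * B \<mu> \<nu>) = 0"
proof -
  let ?T = "\<Sum>\<nu>\<in>I. \<Sum>\<mu>\<in>I. H \<mu> \<nu> * B \<mu> \<nu>"
  have "?T = (\<Sum>\<mu>\<in>I. \<Sum>\<nu>\<in>I. H \<mu> \<nu> * B \<mu> \<nu>)"
    by (rule sum.swap)
  also have "\<dots> = (\<Sum>\<mu>\<in>I. \<Sum>\<nu>\<in>I. - (H \<nu> \<mu> * B \<nu> \<mu>))"
  proof (intro sum.cong refl)
    fix \<mu> \<nu>
    show "H \<mu> \<nu> * B \<mu> \<nu> = - (H \<nu> \<mu> * B \<nu> \<mu>)"
      using assms(1)[of \<mu> \<nu>] assms(2)[of \<mu> \<nu>] by simp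
  qed
  also have "\<dots> = - ?T"
    by (simp add: sum_negf)
  finally show ?thesis
    by linarith
qed

section \<open>The coordinate volume form\<close>

lemma idx_distinct: "distinct (idx :: 'n::finite list)"
  and idx_set: "set (idx :: 'n::finite list) = UNIV"
proof -
  have "\<exists>xs :: 'n list. distinct xs \<and> set xs = UNIV"
    using finite_distinct_list[of "UNIV :: 'n set"] by auto
  then have "distinct (idx :: 'n list) \<and> set (idx :: 'n list) = UNIV"
    unfolding idx_def by (rule someI_ex)
  then show "distinct (idx :: 'n list)" "set (idx :: 'n list) = UNIV"
    by simp_all
qed

lemma length_idx: "length (idx :: 'n::finite list) = CARD('n)"
  using distinct_card[OF idx_distinct[where 'n='n]] by (simp add: idx_set)

lemma sum_idx: "(\<Sum>j<CARD('n::finite). g ((idx :: 'n list) ! j)) = (\<Sum>\<mu>\<in>UNIV. g \<mu>)"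
proof -
  have "(\<Sum>\<mu>\<in>UNIV. g \<mu>) = sum_list (map g (idx :: 'n list))"
    using sum.distinct_set_conv_list[OF idx_distinct[where 'n='n], of g] by (simp add: idx_set)
  then show ?thesis
    by (simp add: sum_list_sum_nth length_idx atLeast0LessThan)
qed

definition coord_det :: "(real^'n::finite) list \<Rightarrow> real" where
  "coord_det ws = (\<Sum>\<sigma> | \<sigma> permutes {..<CARD('n)}.
     of_int (sign \<sigma>) * (\<Prod>k<CARD('n). (ws ! \<sigma> k) $ (idx ! k)))"

definition coord_frame :: "(real^'n::finite) list" where
  "coord_frame = map (\<lambda>\<mu>. axis \<mu> 1) idx"

lemma beta_eq_coord_det:
  "beta x vs = (if length vs = CARD('n::finite) then coord_det (map fst vs :: (real^'n) list) else 0)"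
proof -
  have "fst (vs ! \<sigma> k) = map fst vs ! \<sigma> k"
    if "length vs = CARD('n)" "\<sigma> permutes {..<CARD('n)}" "k < CARD('n)" for \<sigma> k
    using that permutes_in_image[OF that(2), of k] by simp
  then show ?thesis
    unfolding beta_def coord_det_def by (auto intro!: sum.cong prod.cong)
qed

lemma coord_det_permute_list:
  assumes "length (ws :: (real^'n::finite) list) = CARD('n)" "\<pi> permutes {..<CARD('n)}"
  shows "coord_det (permute_list \<pi> ws) = of_int (sign \<pi>) * coord_det ws"
proof -
  let ?P = "{\<sigma>. \<sigma> permutes {..<CARD('n)}}"
  let ?g = "\<lambda>\<tau>. of_int (sign \<tau>) * (\<Prod>k<CARD('n). (ws ! \<tau> k) $ (idx ! k))"
  have "coord_det (permute_list \<pi> ws) = (\<Sum>\<sigma>\<in>?P. of_int (sign \<pi>) * ?g (\<pi> \<circ> \<sigma>))"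
    unfolding coord_det_def
  proof (intro sum.cong refl)
    fix \<sigma> assume "\<sigma> \<in> ?P"
    then have "\<sigma> k < CARD('n)" if "k < CARD('n)" for k
      using that permutes_in_image[of \<sigma> "{..<CARD('n)}" k] by simp
    then have "permute_list \<pi> ws ! \<sigma> k = ws ! \<pi> (\<sigma> k)" if "k < CARD('n)" for k
      using assms that by (simp add: permute_list_nth)
    moreover have "sign (\<pi> \<circ> \<sigma>) = sign \<pi> * sign \<sigma>"
      using \<open>\<sigma> \<in> ?P\<close> assms(2) sign_compose permutes_imp_permutation by (metis finite_lessThan mem_Collect_eq)
    ultimately show "of_int (sign \<sigma>) * (\<Prod>k<CARD('n). (permute_list \<pi> ws ! \<sigma> k) $ (idx ! k))
        = of_int (sign \<pi>) * ?g (\<pi> \<circ> \<sigma>)"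
      by (simp add: mult.assoc[symmetric] flip: of_int_mult)
  qed
  also have "\<dots> = of_int (sign \<pi>) * (\<Sum>\<sigma>\<in>?P. ?g \<sigma>)"
    using setum_permutations_compose_left[OF assms(2), of ?g] by (simp add: sum_distrib_left)
  finally show ?thesis
    unfolding coord_det_def by simp
qed

lemma coord_det_eq_0_if_zero:
  assumes "j < CARD('n::finite)" "(ws :: (real^'n) list) ! j = 0"
  shows "coord_det ws = 0"
  unfolding coord_det_def
proof (intro sum.neutral ballI)
  fix \<sigma> assume "\<sigma> \<in> {\<sigma>. \<sigma> permutes {..<CARD('n)}}"
  then have "\<sigma> permutes {..<CARD('n)}" by simp
  then have "inv \<sigma> j < CARD('n)" "\<sigma> (inv \<sigma> j) = j"
    using assms(1) permutes_in_image[OF permutes_inv] permutes_inverses(1) by fastforce+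
  then have "(\<Prod>k<CARD('n). (ws ! \<sigma> k) $ (idx ! k)) = 0"
    using assms(2) by (intro prod_zero) force+
  then show "of_int (sign \<sigma>) * (\<Prod>k<CARD('n). (ws ! \<sigma> k) $ (idx ! k)) = 0"
    by simp
qed

lemma permute_list_transpose:
  assumes "i < length xs" "j < length xs"
  shows "permute_list (Transposition.transpose i j) xs = xs[i := xs ! j, j := xs ! i]"
  using assms by (intro nth_equalityI) (auto simp: permute_list_def transpose_def nth_list_update)

lemma coord_det_swap:
  assumes "length (ws :: (real^'n::finite) list) = CARD('n)"
    and "i < CARD('n)" "j < CARD('n)" "i \<noteq> j"
  shows "coord_det (ws[i := ws ! j, j := ws ! i]) = - coord_det ws"
  using coord_det_permute_list[OF assms(1), of "Transposition.transpose i j"] assms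
  by (simp add: permute_list_transpose permutes_swap_id sign_swap_id)

lemma coord_det_eq_0_if_repeated:
  assumes "length (ws :: (real^'n::finite) list) = CARD('n)"
    and "i < CARD('n)" "j < CARD('n)" "i \<noteq> j" "ws ! i = ws ! j"
  shows "coord_det ws = 0"
proof -
  have "ws[i := ws ! j, j := ws ! i] = ws"
    using assms(5) by (metis list_update_id)
  then show ?thesis
    using coord_det_swap[OF assms(1-4)] by simp
qed

lemma coord_det_swap_adjacent:
  assumes "length (zs @ a # b # ys :: (real^'n::finite) list) = CARD('n)"
  shows "coord_det (zs @ a # b # ys) = - coord_det (zs @ b # a # ys)"
  using coord_det_swap[OF assms, of "length zs" "Suc (length zs)"] assms
  by (simp add: list_update_append nth_append)

lemma coord_det_move:
  "length (zs @ a # xs @ ys :: (real^'n::finite) list) = CARD('n) \<Longrightarrow>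
   coord_det (zs @ a # xs @ ys) = (-1) ^ length xs * coord_det (zs @ xs @ a # ys)"
proof (induction xs arbitrary: zs)
  case Nil
  then show ?case by simp
next
  case (Cons x xs)
  have "coord_det (zs @ a # x # xs @ ys) = - coord_det ((zs @ [x]) @ a # xs @ ys)"
    using coord_det_swap_adjacent[of zs a x "xs @ ys"] Cons.prems by simp
  also have "\<dots> = - ((-1) ^ length xs * coord_det ((zs @ [x]) @ xs @ a # ys))"
    using Cons.IH[of "zs @ [x]"] Cons.prems by simp
  finally show ?case by simp
qed

lemma coord_det_frame: "coord_det (coord_frame :: (real^'n::finite) list) = 1"
proof -
  have "(\<Prod>k<CARD('n). (coord_frame ! \<sigma> k) $ ((idx :: 'n list) ! k)) = (if \<sigma> = id then 1 else 0)"
    if \<sigma>: "\<sigma> permutes {..<CARD('n)}" for \<sigma>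
  proof -
    have entry: "(coord_frame ! \<sigma> k) $ ((idx :: 'n list) ! k) = (if \<sigma> k = k then 1 else 0)"
      if "k < CARD('n)" for k
      using that permutes_in_image[OF \<sigma>, of k] nth_eq_iff_index_eq[OF idx_distinct[where 'n='n], of k "\<sigma> k"]
      by (auto simp: coord_frame_def length_idx axis_def)
    show ?thesis
    proof (cases "\<sigma> = id")
      case False
      then obtain k where "\<sigma> k \<noteq> k" by (metis eq_id_iff)
      moreover have "k < CARD('n)"
        using permutes_not_in[OF \<sigma>] calculation by auto
      ultimately show ?thesis
        using entry False by (intro trans[OF prod_zero]) auto
    next
      case True
      then show ?thesis
        using entry by simp
    qed
  qed
  then have "coord_det (coord_frame :: (real^'n) list)
      = (\<Sum>\<sigma> | \<sigma> permutes {..<CARD('n)}. if \<sigma> = id then 1 else 0)"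
    unfolding coord_det_def by (intro sum.cong) auto
  then show ?thesis
    by (simp add: sum.delta finite_permutations permutes_id)
qed

text \<open>Either axis \<mu> 1 repeats a frame vector, or moving it back to position j costs
  j transpositions.\<close>

lemma coord_det_frame_replace:
  assumes "j < CARD('n::finite)"
  shows "coord_det (axis \<mu> 1 # remove_nth j (coord_frame :: (real^'n) list))
           = (-1) ^ j * (if \<mu> = idx ! j then 1 else 0)"
proof -
  let ?W = "coord_frame :: (real^'n) list"
  have len: "length ?W = CARD('n)"
    by (simp add: coord_frame_def length_idx)
  have "coord_det ([] @ axis \<mu> 1 # take j ?W @ drop (Suc j) ?W)
      = (-1) ^ j * coord_det ([] @ take j ?W @ axis \<mu> 1 # drop (Suc j) ?W)"
    using coord_det_move[of "[]" "axis \<mu> 1" "take j ?W" "drop (Suc j) ?W"] len assms by simp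
  also have "take j ?W @ axis \<mu> 1 # drop (Suc j) ?W = ?W[j := axis \<mu> 1]"
    using len assms by (simp add: upd_conv_take_nth_drop)
  finally have moved: "coord_det (axis \<mu> 1 # remove_nth j ?W) = (-1) ^ j * coord_det (?W[j := axis \<mu> 1])"
    by (simp add: remove_nth_def)
  show ?thesis
  proof (cases "\<mu> = idx ! j")
    case True
    then have "?W[j := axis \<mu> 1] = ?W"
      using assms by (metis coord_frame_def length_idx list_update_id nth_map)
    then show ?thesis
      using moved True coord_det_frame by simp
  next
    case False
    obtain m where m: "m < CARD('n)" "idx ! m = \<mu>"
      using idx_set[where 'n='n] length_idx[where 'n='n] by (metis UNIV_I in_set_conv_nth)
    then have "coord_det (?W[j := axis \<mu> 1]) = 0"
      using False len assms
      by (intro coord_det_eq_0_if_repeated[of _ j m]) (auto simp: nth_list_update coord_frame_def length_idx)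
    then show ?thesis
      using moved False by simp
  qed
qed

lemma beta_point_indep: "beta x vs = beta y vs"
  by (simp add: beta_def)

lemma beta_eq_0_if_fst_zero:
  assumes "j < length vs" "fst (vs ! j) = (0 :: real^'n::finite)"
  shows "beta x vs = 0"
  using assms coord_det_eq_0_if_zero[of j "map fst vs"] by (simp add: beta_eq_coord_det)

lemma beta_swap: "beta x (v # w # vs) = - beta x (w # v # vs)"
  using coord_det_swap_adjacent[of "[]" "fst v" "fst w" "map fst vs"] by (simp add: beta_eq_coord_det)

lemma fst_eu [simp]: "fst (eu :: 'n::finite jet) = 0"
  and fst_ep [simp]: "fst (ep \<mu> :: 'n::finite jet) = 0"
  and fst_eq [simp]: "fst (eq \<mu> :: 'n::finite jet) = axis \<mu> 1"
  by (simp_all add: eu_def ep_def eq_def)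

lemma beta_vertical [simp]:
  fixes v w :: "'n::finite jet"
  shows "beta x (eu # vs) = 0" "beta x (v # eu # vs) = 0"
    and "beta x (ep \<mu> # vs) = 0" "beta x (v # ep \<mu> # vs) = 0" "beta x (v # w # ep \<mu> # vs) = 0"
  by (simp_all add: beta_eq_0_if_fst_zero[of 0] beta_eq_0_if_fst_zero[of 1] beta_eq_0_if_fst_zero[of 2])

lemma remove_nth_Cons_0 [simp]: "remove_nth 0 (v # vs) = vs"
  and remove_nth_Cons_Suc [simp]: "remove_nth (Suc j) (v # vs) = v # remove_nth j vs"
  by (simp_all add: remove_nth_def)

lemma contact_single: "contact x [v] = fst (snd v) - snd (snd x) \<bullet> fst v"
  by (simp add: contact_def)

lemma contact_eu [simp]: "contact x [eu :: 'n::finite jet] = 1"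
  and contact_ep [simp]: "contact x [ep \<mu> :: 'n::finite jet] = 0"
  by (simp_all add: contact_single eu_def ep_def)

definition proj_diff :: "('n::finite jet \<Rightarrow> real) \<Rightarrow> 'n jet \<Rightarrow> 'n jet \<Rightarrow> real" where
  "proj_diff f x v = dd f x v - dd f x eu * contact x [v]"

lemma proj_diff_eu [simp]: "proj_diff f x eu = 0"
  and proj_diff_ep [simp]: "proj_diff f x (ep \<mu>) = dd f x (ep \<mu>)"
  by (simp_all add: proj_diff_def)

lemma extd_sum_coefficients:
  fixes f :: "'i \<Rightarrow> 'n::finite jet \<Rightarrow> real"
  assumes "open S" "x \<in> S" "finite I" "\<And>i. i \<in> I \<Longrightarrow> f i differentiable (at x)"
    and "\<And>y ws. y \<in> S \<Longrightarrow> \<alpha> y ws = (\<Sum>i\<in>I. f i y * \<gamma> i ws)"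
  shows "extd \<alpha> x vs = (\<Sum>j<length vs. (-1)^j * (\<Sum>i\<in>I. dd (f i) x (vs ! j) * \<gamma> i (remove_nth j vs)))"
  unfolding extd_def
proof (intro sum.cong refl arg_cong2[where f = "(*)"])
  fix j
  have "dd (\<lambda>y. \<alpha> y (remove_nth j vs)) x (vs ! j)
      = dd (\<lambda>y. \<Sum>i\<in>I. f i y * \<gamma> i (remove_nth j vs)) x (vs ! j)"
    using assms(1,2,5) by (rule dd_cong_open)
  also have "\<dots> = (\<Sum>i\<in>I. dd (f i) x (vs ! j) * \<gamma> i (remove_nth j vs))"
    using assms(3,4) by (rule dd_sum_mult)
  finally show "dd (\<lambda>y. \<alpha> y (remove_nth j vs)) x (vs ! j)
      = (\<Sum>i\<in>I. dd (f i) x (vs ! j) * \<gamma> i (remove_nth j vs))" .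
qed

text \<open>The \<gamma> i are constant forms without a du component, so d_p acts on the coefficients
  alone: d_p (f \<gamma>) = d_p f \<and> \<gamma>.\<close>

lemma dproj_sum_coefficients:
  fixes f :: "'i \<Rightarrow> 'n::finite jet \<Rightarrow> real"
  assumes "open S" "x \<in> S" "finite I" "\<And>i. i \<in> I \<Longrightarrow> f i differentiable (at x)"
    and "\<And>y ws. y \<in> S \<Longrightarrow> \<alpha> y ws = (\<Sum>i\<in>I. f i y * \<gamma> i ws)"
    and "\<And>i ws. i \<in> I \<Longrightarrow> \<gamma> i (eu # ws) = 0"
  shows "dproj \<alpha> x vs = (\<Sum>j<length vs. (-1)^j * (\<Sum>i\<in>I. proj_diff (f i) x (vs ! j) * \<gamma> i (remove_nth j vs)))"
proof -
  have extd: "extd \<alpha> x ws = (\<Sum>j<length ws. (-1)^j * (\<Sum>i\<in>I. dd (f i) x (ws ! j) * \<gamma> i (remove_nth j ws)))"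
    for ws
    by (rule extd_sum_coefficients[where S = S]) (use assms in auto)
  have "interior eu (extd \<alpha>) x ws = (\<Sum>i\<in>I. dd (f i) x eu * \<gamma> i ws)" for ws
    unfolding interior_def extd length_Cons sum.lessThan_Suc_shift using assms(6) by simp
  then have "dproj \<alpha> x vs = (\<Sum>j<length vs. (-1)^j * (\<Sum>i\<in>I. dd (f i) x (vs ! j) * \<gamma> i (remove_nth j vs)))
      - (\<Sum>j<length vs. (-1)^j * contact x [vs ! j] * (\<Sum>i\<in>I. dd (f i) x eu * \<gamma> i (remove_nth j vs)))"
    unfolding dproj_def proj_def wedge1_def extd by simp
  also have "\<dots> = (\<Sum>j<length vs. (-1)^j * (\<Sum>i\<in>I. proj_diff (f i) x (vs ! j) * \<gamma> i (remove_nth j vs)))"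
    unfolding proj_diff_def sum_subtractf[symmetric]
    by (intro sum.cong refl) (simp add: sum_distrib_left sum_subtractf[symmetric] algebra_simps)
  finally show ?thesis .
qed

section \<open>The Euler operator of a first-order Lagrangian\<close>

lemma open_J1:
  assumes "open U"
  shows "open (J1 U)"
proof -
  have "J1 U = fst -` U"
    by (auto simp: J1_def)
  then show ?thesis
    using assms by (simp add: open_vimage_fst)
qed

lemma smooth_on_differentiable:
  assumes "smooth_on S L" "x \<in> S"
  shows "L differentiable (at x)" and "(\<lambda>y. dd L y v) differentiable (at x)"
proof -
  have "ddl L [] differentiable (at x)" "ddl L [v] differentiable (at x)"
    using assms unfolding smooth_on_def by blast+
  then show "L differentiable (at x)" "(\<lambda>y. dd L y v) differentiable (at x)"
    by simp_all
qed

context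
  fixes S :: "'n::finite jet set" and L :: "'n jet \<Rightarrow> real"
  assumes S: "open S" and L: "smooth_on S L"
begin

lemma bot_dproj_lagrangian:
  assumes "x \<in> S"
  shows "bot (Suc CARD('n)) (dproj (\<lambda>x vs. L x * beta x vs)) x ws
           = (\<Sum>\<mu>\<in>UNIV. dd L x (ep \<mu>) * - beta 0 (eq \<mu> # ws))"
proof -
  have "dproj (\<lambda>x vs. L x * beta x vs) x vs
      = (\<Sum>j<length vs. (-1)^j * (\<Sum>i\<in>{()}. proj_diff L x (vs ! j) * beta 0 (remove_nth j vs)))" for vs
  proof (rule dproj_sum_coefficients[OF S assms])
    show "L y * beta y ws = (\<Sum>i\<in>{()}. L y * beta 0 ws)" for y ws
      by (simp add: beta_point_indep[of y _ 0])
  qed (simp_all add: smooth_on_differentiable[OF L assms])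
  then show ?thesis
    unfolding bot_def interior_def by (simp only: length_Cons sum.lessThan_Suc_shift) simp
qed

lemma euler_op_lagrangian:
  assumes "x \<in> S"
  shows "euler_op CARD('n) (\<lambda>x vs. L x * beta x vs) x vs
    = (\<Sum>j<length vs. (-1)^j *
         (\<Sum>\<mu>\<in>UNIV. proj_diff (\<lambda>y. dd L y (ep \<mu>)) x (vs ! j) * - beta 0 (eq \<mu> # remove_nth j vs)))
      + dd L x eu * beta 0 vs"
proof -
  have "dproj (bot (Suc CARD('n)) (dproj (\<lambda>x vs. L x * beta x vs))) x vs
    = (\<Sum>j<length vs. (-1)^j *
         (\<Sum>\<mu>\<in>UNIV. proj_diff (\<lambda>y. dd L y (ep \<mu>)) x (vs ! j) * - beta 0 (eq \<mu> # remove_nth j vs)))"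
    by (rule dproj_sum_coefficients[OF S assms, where \<gamma> = "\<lambda>\<mu> ws. - beta 0 (eq \<mu> # ws)"])
      (simp_all add: bot_dproj_lagrangian smooth_on_differentiable[OF L assms])
  moreover have "lie_chi (\<lambda>x vs. L x * beta x vs) x vs = dd L x eu * beta 0 vs"
  proof -
    have "(\<lambda>y. L y * beta y vs) = (\<lambda>y. L y * beta 0 vs)"
      by (simp add: beta_def)
    then show ?thesis
      using dd_sum_mult[of "{()}" "\<lambda>_. L" x "\<lambda>_. beta 0 vs" eu] smooth_on_differentiable[OF L assms]
      by (simp add: lie_chi_def)
  qed
  ultimately show ?thesis
    unfolding euler_op_def by simp
qed

lemma interior_eu_euler_op_lagrangian:
  "x \<in> S \<Longrightarrow> interior eu (euler_op CARD('n) (\<lambda>x vs. L x * beta x vs)) x ws = 0"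
  unfolding interior_def euler_op_lagrangian by (simp only: length_Cons sum.lessThan_Suc_shift) simp

lemma bot_euler_op_lagrangian:
  assumes "x \<in> S"
  shows "bot CARD('n) (euler_op CARD('n) (\<lambda>x vs. L x * beta x vs)) x ws = 0"
proof (cases "CARD('n) > 1")
  case True
  define H where "H \<mu> \<nu> = dd (\<lambda>y. dd L y (ep \<mu>)) x (ep \<nu>)" for \<mu> \<nu>
  have "bot CARD('n) (euler_op CARD('n) (\<lambda>x vs. L x * beta x vs)) x ws
      = (\<Sum>\<nu>\<in>UNIV. \<Sum>\<mu>\<in>UNIV. H \<mu> \<nu> * beta 0 (eq \<mu> # eq \<nu> # ws))"
    using True unfolding bot_def interior_def euler_op_lagrangian[OF assms]
    by (simp only: length_Cons sum.lessThan_Suc_shift) (simp add: H_def sum_negf)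
  also have "\<dots> = 0"
  proof (rule sum_symmetric_antisymmetric)
    show "H \<mu> \<nu> = H \<nu> \<mu>" for \<mu> \<nu>
      unfolding H_def
      by (rule dd_dd_commute[OF S assms]) (auto intro: smooth_on_differentiable[OF L] assms)
  qed (rule beta_swap)
  finally show ?thesis .
qed (simp add: bot_def)

lemma effective_euler_op_lagrangian:
  "effective S CARD('n) (euler_op CARD('n) (\<lambda>x vs. L x * beta x vs))"
  unfolding effective_def
  using interior_eu_euler_op_lagrangian bot_euler_op_lagrangian by blast

end

section \<open>Pulling back along a first jet prolongation\<close>

context
  fixes U :: "(real^'n::finite) set" and \<phi> :: "real^'n \<Rightarrow> real" and q :: "real^'n"
  assumes \<phi>: "smooth_on U \<phi>" and q: "q \<in> U"
begin

lemma jet1_has_derivative: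
  "(jet1 \<phi> has_derivative (\<lambda>h. (h, frechet_derivative \<phi> (at q) h,
      \<Sum>\<nu>\<in>UNIV. frechet_derivative (\<lambda>q'. dd \<phi> q' (axis \<nu> 1)) (at q) h *\<^sub>R axis \<nu> 1))) (at q)"
proof -
  have "jet1 \<phi> = (\<lambda>q'. (q', \<phi> q', \<Sum>\<nu>\<in>UNIV. dd \<phi> q' (axis \<nu> 1) *\<^sub>R axis \<nu> 1))"
    by (simp add: jet1_def fun_eq_iff vec_eq_iff axis_def if_distrib cong: if_cong)
  then show ?thesis
    using smooth_on_differentiable[OF \<phi> q]
    by (simp only:) (intro has_derivative_Pair has_derivative_ident has_derivative_sum
        has_derivative_scaleR_left; simp add: frechet_derivative_works)
qed

lemma jet1_differentiable: "jet1 \<phi> differentiable (at q)"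
  using jet1_has_derivative by (auto simp: differentiable_def)

lemma fst_dd_jet1 [simp]: "fst (dd (jet1 \<phi>) q v) = v"
  by (simp add: dd_eq_has_derivative[OF jet1_has_derivative])

lemma contact_dd_jet1: "contact (jet1 \<phi> q) [dd (jet1 \<phi>) q (axis \<mu> 1)] = 0"
  using smooth_on_differentiable[OF \<phi> q]
  by (simp add: contact_single dd_eq_has_derivative[OF jet1_has_derivative] jet1_def
      inner_axis dd_eq_frechet_derivative)

lemma MA_euler_op_lagrangian:
  assumes L: "smooth_on (J1 U) L" and U: "open U"
  shows "MA (euler_op CARD('n) (\<lambda>x vs. L x * beta x vs)) \<phi> q = EL L \<phi> q"
proof -
  define x where "x = jet1 \<phi> q"
  define V where "V \<mu> = dd (jet1 \<phi>) q (axis \<mu> 1)" for \<mu>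
  define vs where "vs = map V idx"
  have x: "x \<in> J1 U"
    unfolding x_def J1_def jet1_def using q by simp
  have len: "length vs = CARD('n)"
    unfolding vs_def by (simp add: length_idx)
  have frame: "map fst vs = coord_frame"
    unfolding vs_def coord_frame_def V_def by simp
  have "map fst (remove_nth j vs) = remove_nth j (map fst vs)" for j
    by (simp add: remove_nth_def take_map drop_map)
  then have beta_remove: "beta 0 (eq \<mu> # remove_nth j vs) = (-1) ^ j * (if \<mu> = idx ! j then 1 else 0)"
    if "j < CARD('n)" for j \<mu>
    using that coord_det_frame_replace[OF that, of \<mu>] len frame
    by (simp add: beta_eq_coord_det remove_nth_def)
  have tangent: "proj_diff (\<lambda>y. dd L y (ep \<mu>)) x (V \<nu>) = dd (\<lambda>q'. dd L (jet1 \<phi> q') (ep \<mu>)) q (axis \<nu> 1)"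
    for \<mu> \<nu>
  proof -
    have "dd (\<lambda>q'. dd L (jet1 \<phi> q') (ep \<mu>)) q (axis \<nu> 1) = dd (\<lambda>y. dd L y (ep \<mu>)) x (V \<nu>)"
      unfolding x_def V_def
      by (rule dd_chain[OF jet1_differentiable smooth_on_differentiable(2)[OF L x[unfolded x_def]]])
    then show ?thesis
      by (simp add: proj_diff_def x_def V_def contact_dd_jet1)
  qed
  have "(\<Sum>\<mu>\<in>UNIV. proj_diff (\<lambda>y. dd L y (ep \<mu>)) x (vs ! j) * - beta 0 (eq \<mu> # remove_nth j vs))
      = - ((-1) ^ j * dd (\<lambda>q'. dd L (jet1 \<phi> q') (ep (idx ! j))) q (axis (idx ! j) 1))"
    if "j < CARD('n)" for j
  proof -
    have nth_vs: "vs ! j = V (idx ! j)"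
      using that by (simp add: vs_def length_idx)
    have "(\<Sum>\<mu>\<in>UNIV. proj_diff (\<lambda>y. dd L y (ep \<mu>)) x (vs ! j) * - beta 0 (eq \<mu> # remove_nth j vs))
        = (\<Sum>\<mu>\<in>UNIV. if \<mu> = idx ! j then - ((-1) ^ j * proj_diff (\<lambda>y. dd L y (ep \<mu>)) x (V (idx ! j))) else 0)"
      using that by (intro sum.cong refl) (simp add: beta_remove[OF that] vs_def[symmetric] nth_vs)
    then show ?thesis
      by (simp add: tangent)
  qed
  note column = this
  have "beta 0 vs = 1"
    using coord_det_frame len frame by (simp add: beta_eq_coord_det)
  have "MA (euler_op CARD('n) (\<lambda>x vs. L x * beta x vs)) \<phi> q
      = euler_op CARD('n) (\<lambda>x vs. L x * beta x vs) x vs"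
    by (simp add: MA_def x_def vs_def V_def[abs_def])
  also have "\<dots> = dd L x eu - (\<Sum>j<CARD('n). dd (\<lambda>q'. dd L (jet1 \<phi> q') (ep (idx ! j))) q (axis (idx ! j) 1))"
    using column \<open>beta 0 vs = 1\<close>
    by (simp add: euler_op_lagrangian[OF open_J1[OF U] L x] len sum_negf)
  also have "\<dots> = EL L \<phi> q"
    by (simp add: sum_idx[of "\<lambda>\<mu>. dd (\<lambda>q'. dd L (jet1 \<phi> q') (ep \<mu>)) q (axis \<mu> 1)"] EL_def x_def)
  finally show ?thesis .
qed

end

theorem mainTheorem3:
  fixes U :: "(real^'n::finite) set" and L :: "'n jet \<Rightarrow> real"
  assumes "open U" and "smooth_on (J1 U) L"
  shows "effective (J1 U) CARD('n) (euler_op CARD('n) (\<lambda>x vs. L x * beta x vs)) \<and>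
         (\<forall>\<phi>. smooth_on U \<phi> \<longrightarrow> (\<forall>q\<in>U.
           MA (euler_op CARD('n) (\<lambda>x vs. L x * beta x vs)) \<phi> q = 0 \<longleftrightarrow> EL L \<phi> q = 0))"
proof -
  have "MA (euler_op CARD('n) (\<lambda>x vs. L x * beta x vs)) \<phi> q = EL L \<phi> q"
    if "smooth_on U \<phi>" "q \<in> U" for \<phi> q
    using MA_euler_op_lagrangian[OF that assms(2,1)] .
  then show ?thesis
    using effective_euler_op_lagrangian[OF open_J1[OF assms(1)] assms(2)] by simp
qed

end
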